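(* Let $\lambda$ be the unique solution in $(0,1)$ of $\frac{x}{1-x}=\ln\frac1x$. For the objective of maximizing the probability of accepting the box with the (strictly) largest value, no deterministic order-unaware algorithm has order competitive ratio better than $\ln\frac1\lambda\approx0.806$: for every deterministic order-unaware algorithm $\textsf{ALG}$ and every $\delta>0$ there exist an instance and an arrival order $\pi$ with $\textsf{ALG}(\pi)\le\left(\ln\frac1\lambda+\delta\right)\textsf{OPT}(\pi)$.
   Context: Setting (max-probability objective): boxes contain independent nonnegative values $v_i\sim F_i$ with known distributions; boxes arrive one at a time in an arrival order $\pi$; upon arrival a box's identity and realized value are revealed and an online algorithm must immediately and irrevocably accept it (and stop) or reject it forever. The algorithm wins if the box it accepts has value strictly greater than $0$ and strictly greater than the values of all other boxes. A deterministic order-unaware algorithm's decision at each step is a deterministic function only of the distributions and the identities and realized values of the boxes arrived so far; an order-aware algorithm additionally knows $\pi$. $\textsf{ALG}(\pi)$ is the winning probability of $\textsf{ALG}$ under $\pi$, and $\textsf{OPT}(\pi)$ the maximum winning probability over order-aware online algorithms under $\pi$. *)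

theory Defs
  imports "HOL-Probability.Product_PMF"
begin

text \<open>A history is the list of (identity, realized value) of the boxes arrived so far
  (including the current one as last element).\<close>

definition valid_instance :: "nat \<Rightarrow> (nat \<Rightarrow> real pmf) \<Rightarrow> bool" where
  "valid_instance n F \<longleftrightarrow> (\<forall>i<n. set_pmf (F i) \<subseteq> {0..})"

definition arrival_order :: "nat \<Rightarrow> nat list \<Rightarrow> bool" where
  "arrival_order n \<pi> \<longleftrightarrow> distinct \<pi> \<and> set \<pi> = {0..<n}"

fun run :: "((nat \<times> real) list \<Rightarrow> bool) \<Rightarrow> (nat \<times> real) list \<Rightarrow> nat list
            \<Rightarrow> (nat \<Rightarrow> real) \<Rightarrow> nat option" where
  "run d h [] v = None"
| "run d h (j # js) v =
     (let h' = h @ [(j, v j)] in if d h' then Some j else run d h' js v)"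

definition wins :: "nat \<Rightarrow> (nat \<Rightarrow> real) \<Rightarrow> nat option \<Rightarrow> bool" where
  "wins n v r \<longleftrightarrow> (case r of None \<Rightarrow> False
     | Some i \<Rightarrow> v i > 0 \<and> (\<forall>j\<in>{0..<n}. j \<noteq> i \<longrightarrow> v j < v i))"

definition win_prob :: "nat \<Rightarrow> (nat \<Rightarrow> real pmf) \<Rightarrow> nat list
                        \<Rightarrow> ((nat \<times> real) list \<Rightarrow> bool) \<Rightarrow> real" where
  "win_prob n F \<pi> d = measure_pmf.prob (Pi_pmf {0..<n} 0 F) {v. wins n v (run d [] \<pi> v)}"

text \<open>OPT(\<pi>): best winning probability over order-aware algorithms. For a fixed instance
  and order, an order-aware deterministic algorithm is just an arbitrary decision rule on
  histories.\<close>
definition OPT :: "nat \<Rightarrow> (nat \<Rightarrow> real pmf) \<Rightarrow> nat list \<Rightarrow> real" where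
  "OPT n F \<pi> = Sup {win_prob n F \<pi> d | d. True}"

text \<open>A deterministic order-unaware algorithm: a decision depending only on the
  instance (n and the distributions) and the history.\<close>
type_synonym unaware_alg = "nat \<Rightarrow> (nat \<Rightarrow> real pmf) \<Rightarrow> (nat \<times> real) list \<Rightarrow> bool"

definition ALG :: "unaware_alg \<Rightarrow> nat \<Rightarrow> (nat \<Rightarrow> real pmf) \<Rightarrow> nat list \<Rightarrow> real" where
  "ALG A n F \<pi> = win_prob n F \<pi> (A n F)"

definition lam :: real where
  "lam = (THE x. 0 < x \<and> x < 1 \<and> x / (1 - x) = ln (1 / x))"

end

theory Submission
  imports Defs
begin

text \<open>The hard instance has a box of sure value \<open>1\<close> and boxes \<open>k = 1..m\<close> of value \<open>k + 1\<close> with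
  small probability \<open>p\<close> and \<open>0\<close> otherwise, where \<open>m p \<approx> ln (1/\<lambda>)\<close>, so that all of them are
  zero with probability \<open>\<theta> = (1 - p)^m \<approx> \<lambda>\<close>. The sure box arrives first, and an
  order-unaware algorithm must commit to taking it or not before learning the rest of the order.
  If it takes it, the adversary sends the other boxes in decreasing order: the algorithm wins
  with probability \<open>\<theta>\<close>, while taking the first box above \<open>1\<close> wins with probability
  \<open>1 - \<theta>\<close>, and the defining equation of \<open>\<lambda>\<close> gives \<open>\<theta> \<le> ln (1/\<lambda>) (1 - \<theta>)\<close>. If it
  rejects it, the adversary uses increasing order: now a win requires taking the last nonzero
  box, which no rule achieves with probability above \<open>m p (1 - p)^(m-1) \<approx> ln (1/\<lambda>) \<theta>\<close>,
  while taking the sure box wins with probability \<open>\<theta>\<close>.\<close>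

lemma lam_root: "0 < lam \<and> lam < 1/2 \<and> lam / (1 - lam) = ln (1 / lam)"
proof -
  define f where "f x = x / (1 - x) - ln (1 / x)" for x :: real
  have f_strict_mono: "f x < f y" if "0 < x" "x < y" "y < 1" for x y
  proof -
    have "x / (1 - x) < y / (1 - y)" using that by (simp add: field_simps)
    moreover have "ln (1/y) < ln (1/x)" using that by (simp add: ln_div)
    ultimately show ?thesis unfolding f_def by linarith
  qed
  have "exp 1 < (8::real)" using exp_le by simp
  hence "1 < ln (8::real)" using ln_less_cancel_iff[of "exp 1" 8] by simp
  hence f_lower: "f (1/8) \<le> 0" unfolding f_def by simp
  have f_upper: "0 < f (1/2)" unfolding f_def using ln_2_less_1 by simp
  have "continuous_on {1/8..1/2} f" unfolding f_def
    by (intro continuous_intros) auto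
  then obtain x0 where x0: "1/8 \<le> x0" "x0 \<le> 1/2" "f x0 = 0"
    using IVT'[of f "1/8" 0 "1/2"] f_lower f_upper by auto
  have "x0 < 1/2" using x0 f_upper by (cases "x0 = 1/2") auto
  have root_iff: "x / (1 - x) = ln (1 / x) \<longleftrightarrow> f x = 0" for x :: real
    unfolding f_def by simp
  have "\<exists>!x::real. 0 < x \<and> x < 1 \<and> x / (1 - x) = ln (1 / x)"
  proof (rule ex1I[where a=x0])
    show "0 < x0 \<and> x0 < 1 \<and> x0 / (1 - x0) = ln (1 / x0)"
      using x0 \<open>x0 < 1/2\<close> root_iff by auto
  next
    fix y :: real assume y: "0 < y \<and> y < 1 \<and> y / (1 - y) = ln (1 / y)"
    show "y = x0"
      using f_strict_mono[of y x0] f_strict_mono[of x0 y] y x0 \<open>x0 < 1/2\<close> root_iff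
      by (cases y x0 rule: linorder_cases) auto
  qed
  hence "lam = x0" unfolding lam_def
    by (rule the1_equality) (use x0 \<open>x0 < 1/2\<close> root_iff in auto)
  thus ?thesis using x0 \<open>x0 < 1/2\<close> root_iff by auto
qed

lemma ln_inv_lam_bounds: "0 < ln (1 / lam)" "ln (1 / lam) < 1"
proof -
  have "0 < lam / (1 - lam)" using lam_root by simp
  thus "0 < ln (1 / lam)" using lam_root by simp
  have "lam / (1 - lam) < 1" using lam_root by (subst divide_less_eq) auto
  thus "ln (1 / lam) < 1" using lam_root by simp
qed

text \<open>Since \<open>\<theta>/(1-\<theta>)\<close> is increasing and equals \<open>ln (1/lam)\<close> at \<open>\<theta> = lam\<close>.\<close>
lemma le_ln_inv_lam_mult:
  assumes "\<theta> \<le> lam"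
  shows "\<theta> \<le> ln (1 / lam) * (1 - \<theta>)"
proof -
  have "lam < 1" "lam / (1 - lam) = ln (1 / lam)" using lam_root by auto
  hence "ln (1 / lam) * (1 - lam) = lam" by (simp add: field_simps)
  hence "lam * (1 + ln (1 / lam)) = ln (1 / lam)"
    by (simp add: algebra_simps)
  moreover have "\<theta> * (1 + ln (1 / lam)) \<le> lam * (1 + ln (1 / lam))"
    using assms ln_inv_lam_bounds by (intro mult_right_mono) auto
  ultimately show ?thesis by (simp add: algebra_simps)
qed

lemma measure_Pi_pmf_insert_two_point:
  fixes F :: "'a \<Rightarrow> 'b pmf"
  assumes "finite A" "k \<notin> A" "0 \<le> p" "p \<le> 1"
    and F_k: "F k = map_pmf (\<lambda>b. if b then a else b0) (bernoulli_pmf p)"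
  shows "measure_pmf.prob (Pi_pmf (insert k A) dflt F) S =
     p * measure_pmf.prob (Pi_pmf A dflt F) {f. f(k := a) \<in> S}
     + (1 - p) * measure_pmf.prob (Pi_pmf A dflt F) {f. f(k := b0) \<in> S}"
proof -
  let ?Q = "Pi_pmf A dflt F"
  define N where "N x = map_pmf (\<lambda>f. f(k := (if x then a else b0))) ?Q" for x
  have "Pi_pmf (insert k A) dflt F = bind_pmf (bernoulli_pmf p) N"
    using assms(1,2) unfolding N_def
    by (simp add: Pi_pmf_insert' F_k map_pmf_def bind_assoc_pmf bind_return_pmf)
  hence "ennreal (measure_pmf.prob (Pi_pmf (insert k A) dflt F) S)
      = emeasure (bind_pmf (bernoulli_pmf p) N) S"
    by (simp add: measure_pmf.emeasure_eq_measure)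
  also have "\<dots> = (\<integral>\<^sup>+x. emeasure (N x) S \<partial>bernoulli_pmf p)" by simp
  also have "\<dots> = emeasure (N True) S * ennreal p + emeasure (N False) S * ennreal (1 - p)"
    using assms by (subst nn_integral_bernoulli_pmf) auto
  also have "\<dots> = ennreal (measure_pmf.prob (N True) S * p + measure_pmf.prob (N False) S * (1 - p))"
    using assms by (simp add: measure_pmf.emeasure_eq_measure ennreal_mult ennreal_plus)
  finally have "measure_pmf.prob (Pi_pmf (insert k A) dflt F) S
      = measure_pmf.prob (N True) S * p + measure_pmf.prob (N False) S * (1 - p)"
    using assms by (subst (asm) ennreal_inj) auto
  thus ?thesis unfolding N_def by (simp add: vimage_def mult.commute)
qed

definition win_prob_from ::
    "nat \<Rightarrow> (nat \<Rightarrow> real pmf) \<Rightarrow> ((nat \<times> real) list \<Rightarrow> bool) \<Rightarrow> (nat \<times> real) list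
      \<Rightarrow> (nat \<Rightarrow> real) \<Rightarrow> nat \<Rightarrow> real" where
  "win_prob_from n F d h u k = measure_pmf.prob (Pi_pmf {k..<n} 0 F)
     {f. wins n (override_on f u {..<k}) (run d h [k..<n] (override_on f u {..<k}))}"

lemma win_prob_from_two_point:
  fixes d :: "(nat \<times> real) list \<Rightarrow> bool" and h :: "(nat \<times> real) list" and u :: "nat \<Rightarrow> real"
  assumes "k < n" "0 \<le> p" "p \<le> 1"
    and F_k: "F k = map_pmf (\<lambda>b. if b then a else b0) (bernoulli_pmf p)"
  defines "W \<equiv> \<lambda>y. if d (h @ [(k, y)])
      then measure_pmf.prob (Pi_pmf {Suc k..<n} 0 F) {f. wins n (override_on f (u(k := y)) {..<Suc k}) (Some k)}
      else win_prob_from n F d (h @ [(k, y)]) (u(k := y)) (Suc k)"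
  shows "win_prob_from n F d h u k = p * W a + (1 - p) * W b0"
proof -
  have split: "{k..<n} = insert k {Suc k..<n}" "[k..<n] = k # [Suc k..<n]"
    using \<open>k < n\<close> by (auto simp: upt_conv_Cons)
  have override_upd: "override_on (f(k := y)) u {..<k} = override_on f (u(k := y)) {..<Suc k}"
    for f y by (auto simp: override_on_def)
  show ?thesis
    unfolding win_prob_from_def split(1)
    using measure_Pi_pmf_insert_two_point[where A="{Suc k..<n}" and k=k and F=F and dflt=0,
        OF _ _ assms(2,3) F_k]
    by (auto simp: split(2) override_upd W_def win_prob_from_def Let_def simp del: upt_Suc)
qed

definition hard_box :: "real \<Rightarrow> nat \<Rightarrow> real pmf" where
  "hard_box p k = (if k = 0 then return_pmf 1
     else map_pmf (\<lambda>b. if b then real k + 1 else 0) (bernoulli_pmf p))"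

lemma set_pmf_hard_box: "set_pmf (hard_box p k) \<subseteq> (if k = 0 then {1} else {0, real k + 1})"
  by (auto simp: hard_box_def)

lemma valid_instance_hard_box: "valid_instance n (hard_box p)"
  unfolding valid_instance_def
proof (intro allI impI)
  fix i show "set_pmf (hard_box p i) \<subseteq> {0..}"
    using set_pmf_hard_box[of p i] by (cases "i = 0") auto
qed

lemma measure_Pi_hard_box_all_less:
  assumes "0 \<le> p" "p \<le> 1" "1 \<le> a" "0 < t" "t \<le> real a + 1"
  shows "measure_pmf.prob (Pi_pmf {a..<n} 0 (hard_box p)) {f. \<forall>j\<in>{a..<n}. f j < t} = (1 - p) ^ (n - a)"
proof -
  have box_less: "measure_pmf.prob (hard_box p j) {x. x < t} = 1 - p" if "j \<in> {a..<n}" for j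
  proof -
    have "j \<noteq> 0" using that assms(3) by simp
    moreover have "(\<lambda>b. if b then real j + 1 else 0) -` {x. x < t} = {False}"
      using that assms by (auto split: if_splits)
    ultimately have "measure_pmf.prob (hard_box p j) {x. x < t} = measure_pmf.prob (bernoulli_pmf p) {False}"
      by (simp add: hard_box_def)
    also have "\<dots> = 1 - p" using assms by (simp add: measure_pmf_single)
    finally show ?thesis .
  qed
  have "{f. \<forall>j\<in>{a..<n}. f j < t} = Pi {a..<n} (\<lambda>_. {x. x < t})" by (auto simp: Pi_def)
  thus ?thesis by (simp add: measure_Pi_pmf_Pi box_less)
qed

lemma measure_Pi_hard_box_accept_le:
  assumes "0 \<le> p" "p \<le> 1" "1 \<le> k"
  shows "measure_pmf.prob (Pi_pmf {Suc k..<n} 0 (hard_box p))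
      {f. wins n (override_on f (u(k := real k + 1)) {..<Suc k}) (Some k)} \<le> (1 - p) ^ (n - Suc k)"
proof -
  let ?Q = "Pi_pmf {Suc k..<n} 0 (hard_box p)"
  have "{f. wins n (override_on f (u(k := real k + 1)) {..<Suc k}) (Some k)}
      \<subseteq> {f. \<forall>i\<in>{Suc k..<n}. f i < real k + 1}"
    by (auto simp: wins_def override_on_def)
  hence "measure_pmf.prob ?Q {f. wins n (override_on f (u(k := real k + 1)) {..<Suc k}) (Some k)}
      \<le> measure_pmf.prob ?Q {f. \<forall>i\<in>{Suc k..<n}. f i < real k + 1}"
    by (rule measure_pmf.finite_measure_mono) simp
  also have "\<dots> = (1 - p) ^ (n - Suc k)"
    using assms by (intro measure_Pi_hard_box_all_less) auto
  finally show ?thesis .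
qed

lemma odds_term_le:
  fixes p :: real
  assumes "real j * p \<le> 1 - p" "0 \<le> p" "p \<le> 1"
  shows "real j * p * (1 - p) ^ (j - 1) \<le> (1 - p) ^ j"
proof (cases j)
  case (Suc i)
  have "real j * p * (1 - p) ^ i \<le> (1 - p) * (1 - p) ^ i"
    using assms by (intro mult_right_mono) auto
  thus ?thesis using Suc by simp
qed simp

text \<open>Against the ascending order, a win needs the accepted box to be the last nonzero one, so
  no rule beats the odds-type bound \<open>j p (1-p)^(j-1)\<close> for \<open>j\<close> remaining boxes, as long as
  the odds \<open>j p / (1-p)\<close> stay below \<open>1\<close>.\<close>
lemma win_prob_from_hard_box_le:
  assumes "0 \<le> p" "p \<le> 1" "1 \<le> k" "real (n - k) * p \<le> 1 - p"
  shows "win_prob_from n (hard_box p) d h u k \<le> real (n - k) * p * (1 - p) ^ (n - k - 1)"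
  using assms
proof (induction "n - k" arbitrary: k u h)
  case 0
  thus ?case by (simp add: win_prob_from_def wins_def)
next
  case (Suc j)
  let ?Q = "Pi_pmf {Suc k..<n} 0 (hard_box p)"
  let ?B = "real j * p * (1 - p) ^ (j - 1)"
  define W where "W y = (if d (h @ [(k, y)])
      then measure_pmf.prob ?Q {f. wins n (override_on f (u(k := y)) {..<Suc k}) (Some k)}
      else win_prob_from n (hard_box p) d (h @ [(k, y)]) (u(k := y)) (Suc k))" for y
  have j_eq: "n - Suc k = j" "n - k = Suc j" using Suc.hyps(2) by simp_all
  have "real j * p \<le> real (n - k) * p"
    using j_eq \<open>0 \<le> p\<close> by (intro mult_right_mono) auto
  hence j_odds: "real j * p \<le> 1 - p" using Suc.prems(4) by linarith
  have IH: "win_prob_from n (hard_box p) d h' u' (Suc k) \<le> ?B" for h' u'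
    using Suc.hyps(1)[of "Suc k" h' u', unfolded j_eq] Suc.prems j_odds by simp
  have "0 \<le> ?B" using Suc.prems by simp
  have "?B \<le> (1 - p) ^ j" using j_odds Suc.prems(1,2) by (rule odds_term_le)
  have W_zero: "W 0 \<le> ?B"
    using IH[of "h @ [(k, 0)]" "u(k := 0)"] \<open>0 \<le> ?B\<close> by (auto simp: W_def wins_def)
  have W_top: "W (real k + 1) \<le> (1 - p) ^ j"
    using measure_Pi_hard_box_accept_le[of p k n u] Suc.prems j_eq IH[of "h @ [(k, real k + 1)]" "u(k := real k + 1)"] \<open>?B \<le> (1 - p) ^ j\<close>
    by (auto simp: W_def)
  have "win_prob_from n (hard_box p) d h u k = p * W (real k + 1) + (1 - p) * W 0"
    unfolding W_def using Suc.prems j_eq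
    by (intro win_prob_from_two_point) (auto simp: hard_box_def)
  also have "\<dots> \<le> p * (1 - p) ^ j + (1 - p) * ?B"
    using W_zero W_top Suc.prems by (intro add_mono mult_left_mono) auto
  also have "\<dots> = real (Suc j) * p * (1 - p) ^ j"
    by (cases j) (auto simp: algebra_simps)
  finally show ?case using j_eq by simp
qed

lemma win_prob_hard_box_Cons_0:
  "win_prob (Suc m) (hard_box p) (0 # xs) d = measure_pmf.prob (Pi_pmf {1..<Suc m} 0 (hard_box p))
     {f. wins (Suc m) (f(0 := 1)) (if d [(0, 1)] then Some 0 else run d [(0, 1)] xs (f(0 := 1)))}"
proof -
  have "{0..<Suc m} = insert 0 {1..<Suc m}" by auto
  hence "Pi_pmf {0..<Suc m} 0 (hard_box p) = map_pmf (\<lambda>f. f(0 := 1)) (Pi_pmf {1..<Suc m} 0 (hard_box p))"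
    by (simp add: Pi_pmf_insert' hard_box_def bind_return_pmf map_pmf_def)
  thus ?thesis by (simp add: win_prob_def vimage_def Let_def)
qed

lemma measure_Pi_hard_box_accept_first:
  assumes "0 \<le> p" "p \<le> 1"
  shows "measure_pmf.prob (Pi_pmf {1..<Suc m} 0 (hard_box p)) {f. wins (Suc m) (f(0 := 1)) (Some 0)} = (1 - p) ^ m"
proof -
  have "{f. wins (Suc m) (f(0 := 1)) (Some 0)} = {f. \<forall>j\<in>{1..<Suc m}. f j < 1}"
    by (auto simp: wins_def)
  thus ?thesis using measure_Pi_hard_box_all_less[of p 1 1 "Suc m"] assms by simp
qed

lemma win_prob_hard_box_accept_first:
  assumes "d [(0, 1)]" "0 \<le> p" "p \<le> 1"
  shows "win_prob (Suc m) (hard_box p) (0 # xs) d = (1 - p) ^ m"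
  using assms measure_Pi_hard_box_accept_first[of p m] by (simp add: win_prob_hard_box_Cons_0)

lemma win_prob_hard_box_ascending_le:
  assumes "\<not> d [(0, 1)]" "0 \<le> p" "p \<le> 1" "real m * p \<le> 1 - p"
  shows "win_prob (Suc m) (hard_box p) (0 # [1..<Suc m]) d \<le> real m * p * (1 - p) ^ (m - 1)"
proof -
  have "override_on f (\<lambda>_. 1) {..<1} = f(0 := 1)" for f :: "nat \<Rightarrow> real"
    by (auto simp: override_on_def)
  hence "win_prob (Suc m) (hard_box p) (0 # [1..<Suc m]) d
      = win_prob_from (Suc m) (hard_box p) d [(0, 1)] (\<lambda>_. 1) 1"
    using assms(1) by (simp add: win_prob_hard_box_Cons_0 win_prob_from_def del: upt_Suc)
  also have "\<dots> \<le> real m * p * (1 - p) ^ (m - 1)"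
    using win_prob_from_hard_box_le[of p 1 "Suc m"] assms by simp
  finally show ?thesis .
qed

lemma set_Pi_pmf_hard_box:
  assumes "f \<in> set_pmf (Pi_pmf A 0 (hard_box p))" "finite A" "j \<in> A" "j \<noteq> 0"
  shows "f j = 0 \<or> f j = real j + 1"
proof -
  have "f \<in> PiE_dflt A 0 (set_pmf \<circ> hard_box p)"
    using set_Pi_pmf_subset'[of A 0 "hard_box p"] assms(1,2) by auto
  hence "f j \<in> set_pmf (hard_box p j)" using assms(3) by (auto simp: PiE_dflt_def)
  thus ?thesis using set_pmf_hard_box[of p j] assms(4) by auto
qed

definition accept_above_one :: "(nat \<times> real) list \<Rightarrow> bool" where
  "accept_above_one h = (1 < snd (last h))"

text \<open>In the descending order the first box above \<open>1\<close> is the last nonzero box of the hard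
  instance, hence the one of largest value.\<close>
lemma run_accept_above_one_descending:
  "(\<forall>j\<in>{1..k}. v j = 0 \<or> v j = real j + 1) \<Longrightarrow> (\<exists>j\<in>{1..k}. v j \<noteq> 0) \<Longrightarrow>
   \<exists>i. run accept_above_one h (rev [1..<Suc k]) v = Some i \<and> 1 \<le> i \<and> i \<le> k \<and>
     v i = real i + 1 \<and> (\<forall>j. i < j \<and> j \<le> k \<longrightarrow> v j = 0)"
proof (induction k arbitrary: h)
  case 0
  thus ?case by auto
next
  case (Suc k)
  have order: "rev [1..<Suc (Suc k)] = Suc k # rev [1..<Suc k]" by simp
  show ?case
  proof (cases "v (Suc k) = 0")
    case False
    hence "v (Suc k) = real (Suc k) + 1" using Suc.prems(1) by auto
    thus ?thesis unfolding order by (auto simp: accept_above_one_def Let_def)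
  next
    case True
    have "\<exists>j\<in>{1..k}. v j \<noteq> 0" using Suc.prems(2) True by (metis atLeastAtMost_iff le_Suc_eq)
    moreover have "\<forall>j\<in>{1..k}. v j = 0 \<or> v j = real j + 1" using Suc.prems(1) by auto
    ultimately obtain i where i: "run accept_above_one (h @ [(Suc k, v (Suc k))]) (rev [1..<Suc k]) v = Some i"
       "1 \<le> i" "i \<le> k" "v i = real i + 1" "\<forall>j. i < j \<and> j \<le> k \<longrightarrow> v j = 0"
      using Suc.IH by blast
    have "run accept_above_one h (rev [1..<Suc (Suc k)]) v = Some i"
      unfolding order using i(1) True by (simp add: accept_above_one_def Let_def del: upt_Suc)
    moreover have "\<forall>j. i < j \<and> j \<le> Suc k \<longrightarrow> v j = 0" using i(5) True le_Suc_eq by blast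
    ultimately show ?thesis using i by auto
  qed
qed

lemma win_prob_hard_box_descending_ge:
  assumes "0 \<le> p" "p \<le> 1"
  shows "1 - (1 - p) ^ m \<le> win_prob (Suc m) (hard_box p) (0 # rev [1..<Suc m]) accept_above_one"
proof -
  let ?Q = "Pi_pmf {1..<Suc m} 0 (hard_box p)"
  let ?W = "{f. wins (Suc m) (f(0 := 1)) (run accept_above_one [(0, 1)] (rev [1..<Suc m]) (f(0 := 1)))}"
  let ?Z = "{f. \<forall>j\<in>{1..<Suc m}. f j < 1}"
  have covered: "set_pmf ?Q \<subseteq> ?W \<union> ?Z"
  proof
    fix f assume f: "f \<in> set_pmf ?Q"
    show "f \<in> ?W \<union> ?Z"
    proof (cases "f \<in> ?Z")
      case False
      define v where "v = f(0 := 1)"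
      have v_values: "\<forall>j\<in>{1..m}. v j = 0 \<or> v j = real j + 1"
        using set_Pi_pmf_hard_box[OF f] by (auto simp: v_def)
      obtain j where "j \<in> {1..<Suc m}" "\<not> f j < 1" using False by auto
      hence "\<exists>j\<in>{1..m}. v j \<noteq> 0" by (auto simp: v_def intro!: bexI[of _ j])
      then obtain i where i: "run accept_above_one [(0, 1)] (rev [1..<Suc m]) v = Some i"
          "1 \<le> i" "i \<le> m" "v i = real i + 1" "\<forall>j. i < j \<and> j \<le> m \<longrightarrow> v j = 0"
        using run_accept_above_one_descending[OF v_values] by blast
      have "v j < v i" if "j \<in> {0..<Suc m}" "j \<noteq> i" for j
proof (cases "j = 0")
        case True thus ?thesis using i by (simp add: v_def)
      next
        case False
        hence "v j = 0 \<or> v j = real j + 1" using v_values that by auto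
        moreover have "i < j \<Longrightarrow> v j = 0" using i that by auto
        ultimately show ?thesis using i that by (cases "i < j") auto
      qed
      hence "wins (Suc m) v (Some i)" using i by (simp add: wins_def)
      thus ?thesis using i(1) by (simp add: v_def)
    qed simp
  qed
  have "1 = measure_pmf.prob ?Q (set_pmf ?Q)"
    using measure_Int_set_pmf[of ?Q UNIV] by simp
  also have "\<dots> \<le> measure_pmf.prob ?Q (?W \<union> ?Z)"
    using covered by (rule measure_pmf.finite_measure_mono) simp
  also have "\<dots> \<le> measure_pmf.prob ?Q ?W + measure_pmf.prob ?Q ?Z"
    by (rule measure_subadditive) auto
  also have "measure_pmf.prob ?Q ?Z = (1 - p) ^ m"
    using measure_Pi_hard_box_all_less[of p 1 1 "Suc m"] assms by simp
  finally have "1 - (1 - p) ^ m \<le> measure_pmf.prob ?Q ?W" by linarith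
  moreover have "\<not> accept_above_one [(0, 1)]" by (simp add: accept_above_one_def)
  ultimately show ?thesis by (simp add: win_prob_hard_box_Cons_0 del: upt_Suc)
qed

lemma win_prob_le_OPT: "win_prob n F \<pi> d \<le> OPT n F \<pi>"
  unfolding OPT_def
  by (rule cSup_upper) (auto simp: win_prob_def bdd_above_def intro!: exI[of _ 1])

lemma exists_odds_between:
  assumes "0 < c" "0 < \<delta>" "c + \<delta> \<le> 1"
  obtains m :: nat and p :: real
  where "1 \<le> m" "0 < p" "p < 1" "c \<le> real m * p" "real m * p \<le> (c + \<delta>) * (1 - p)"
proof -
  obtain N :: nat where N: "3 / \<delta> + 2 < real N" using reals_Archimedean2 by blast
  have "0 < 3 / \<delta>" using assms by simp
  hence N_gt: "2 < real N" using N by linarith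
  have "3 / \<delta> \<le> real N" using N by linarith
  hence N_large: "3 \<le> \<delta> * real N" using assms by (simp add: divide_le_eq mult.commute)
  define p where "p = 1 / real N"
  define m where "m = nat \<lceil>c * real N\<rceil>"
  have "0 < c * real N" using assms N_gt by simp
  hence m_lower: "c * real N \<le> real m" and m_upper: "real m < c * real N + 1"
    unfolding m_def by linarith+
  show ?thesis
  proof
    show "1 \<le> m" using m_lower \<open>0 < c * real N\<close> by simp
    show "0 < p" "p < 1" using N_gt unfolding p_def by auto
    show "c \<le> real m * p" using m_lower N_gt unfolding p_def by (simp add: field_simps)
    have "real m \<le> (c + \<delta>) * (real N - 1)"
      using m_upper N_large assms by (simp add: algebra_simps)
    thus "real m * p \<le> (c + \<delta>) * (1 - p)"
      using N_gt unfolding p_def by (simp add: field_simps)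
  qed
qed

lemma hard_parameters:
  assumes "0 < \<delta>"
  obtains m :: nat and p :: real
  where "0 < p" "p < 1" "(1 - p) ^ m \<le> lam" "real m * p \<le> 1 - p"
    "real m * p * (1 - p) ^ (m - 1) \<le> (ln (1 / lam) + \<delta>) * (1 - p) ^ m"
proof -
  define c where "c = ln (1 / lam)"
  have "0 < c" "c < 1" using ln_inv_lam_bounds c_def by auto
  define \<delta>' where "\<delta>' = min \<delta> (1 - c)"
  have "0 < \<delta>'" "\<delta>' \<le> \<delta>" "c + \<delta>' \<le> 1"
    using assms \<open>c < 1\<close> unfolding \<delta>'_def by auto
  then obtain m p where mp: "1 \<le> m" "0 < p" "p < 1" "c \<le> real m * p"
      "real m * p \<le> (c + \<delta>') * (1 - p)"
    using exists_odds_between[of c \<delta>'] \<open>0 < c\<close> by blast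
  show ?thesis
  proof
    show "0 < p" "p < 1" using mp by simp_all
    have "(1 - p) ^ m \<le> exp (- p) ^ m"
      using mp exp_ge_add_one_self[of "- p"] by (intro power_mono) auto
    also have "\<dots> = exp (- (real m * p))" by (simp add: exp_of_nat_mult[symmetric])
    also have "\<dots> \<le> exp (- c)" using mp by simp
    also have "\<dots> = lam" using lam_root unfolding c_def by (simp add: ln_div)
    finally show "(1 - p) ^ m \<le> lam" .
    have "(c + \<delta>') * (1 - p) \<le> 1 * (1 - p)"
      using \<open>c + \<delta>' \<le> 1\<close> mp(3) by (intro mult_right_mono) simp_all
    thus "real m * p \<le> 1 - p" using mp(5) by simp
    have "(c + \<delta>') * (1 - p) \<le> (c + \<delta>) * (1 - p)"
      using \<open>\<delta>' \<le> \<delta>\<close> mp(3) by (intro mult_right_mono) simp_all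
    hence "real m * p \<le> (c + \<delta>) * (1 - p)" using mp(5) by linarith
    hence "real m * p * (1 - p) ^ (m - 1) \<le> (c + \<delta>) * (1 - p) * (1 - p) ^ (m - 1)"
      using mp(3) by (intro mult_right_mono) simp_all
    also have "\<dots> = (c + \<delta>) * (1 - p) ^ m"
      using \<open>1 \<le> m\<close> by (cases m) simp_all
    finally show "real m * p * (1 - p) ^ (m - 1) \<le> (ln (1 / lam) + \<delta>) * (1 - p) ^ m"
      unfolding c_def .
  qed
qed

lemma hard_order_if_accept_first:
  assumes "d [(0, 1)]" "0 < p" "p < 1" "(1 - p) ^ m \<le> lam" "ln (1 / lam) \<le> K"
  shows "\<exists>\<pi>. arrival_order (Suc m) \<pi> \<and> 0 < OPT (Suc m) (hard_box p) \<pi> \<and>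
    win_prob (Suc m) (hard_box p) \<pi> d \<le> K * OPT (Suc m) (hard_box p) \<pi>"
proof (intro exI conjI)
  let ?\<pi> = "0 # rev [1..<Suc m]" and ?\<theta> = "(1 - p) ^ m"
  show "arrival_order (Suc m) ?\<pi>" by (auto simp: arrival_order_def)
  have OPT_ge: "1 - ?\<theta> \<le> OPT (Suc m) (hard_box p) ?\<pi>"
    using assms(2,3) by (intro order_trans[OF win_prob_hard_box_descending_ge win_prob_le_OPT]) auto
  have "?\<theta> < 1" using assms(4) lam_root by linarith
  thus "0 < OPT (Suc m) (hard_box p) ?\<pi>" using OPT_ge by linarith
  have "win_prob (Suc m) (hard_box p) ?\<pi> d = ?\<theta>"
    using assms(1-3) by (simp add: win_prob_hard_box_accept_first)
  also have "\<dots> \<le> ln (1 / lam) * (1 - ?\<theta>)" using assms(4) by (rule le_ln_inv_lam_mult)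
  also have "\<dots> \<le> K * OPT (Suc m) (hard_box p) ?\<pi>"
    using OPT_ge ln_inv_lam_bounds assms(5) \<open>?\<theta> < 1\<close> by (intro mult_mono) auto
  finally show "win_prob (Suc m) (hard_box p) ?\<pi> d \<le> K * OPT (Suc m) (hard_box p) ?\<pi>" .
qed

lemma hard_order_if_reject_first:
  assumes "\<not> d [(0, 1)]" "0 < p" "p < 1" "real m * p \<le> 1 - p"
    and "real m * p * (1 - p) ^ (m - 1) \<le> K * (1 - p) ^ m" "0 \<le> K"
  shows "\<exists>\<pi>. arrival_order (Suc m) \<pi> \<and> 0 < OPT (Suc m) (hard_box p) \<pi> \<and>
    win_prob (Suc m) (hard_box p) \<pi> d \<le> K * OPT (Suc m) (hard_box p) \<pi>"
proof (intro exI conjI)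
  let ?\<pi> = "0 # [1..<Suc m]" and ?\<theta> = "(1 - p) ^ m"
  show "arrival_order (Suc m) ?\<pi>" by (auto simp: arrival_order_def)
  have OPT_ge: "?\<theta> \<le> OPT (Suc m) (hard_box p) ?\<pi>"
    using win_prob_hard_box_accept_first[of "\<lambda>_. True" p m "[1..<Suc m]"] assms(2,3)
      win_prob_le_OPT[of "Suc m" "hard_box p" ?\<pi> "\<lambda>_. True"] by simp
  moreover have "0 < ?\<theta>" using assms(3) by simp
  ultimately show "0 < OPT (Suc m) (hard_box p) ?\<pi>" by linarith
  have "win_prob (Suc m) (hard_box p) ?\<pi> d \<le> real m * p * (1 - p) ^ (m - 1)"
    using assms(1-4) by (intro win_prob_hard_box_ascending_le) auto
  also have "\<dots> \<le> K * ?\<theta>" by (rule assms(5))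
  also have "\<dots> \<le> K * OPT (Suc m) (hard_box p) ?\<pi>"
    using OPT_ge assms(6) by (rule mult_left_mono)
  finally show "win_prob (Suc m) (hard_box p) ?\<pi> d \<le> K * OPT (Suc m) (hard_box p) ?\<pi>" .
qed

theorem theorem4p2:
  fixes A :: unaware_alg and \<delta> :: real
  assumes "\<delta> > 0"
  shows "\<exists>n F \<pi>. valid_instance n F \<and> arrival_order n \<pi> \<and> OPT n F \<pi> > 0 \<and>
           ALG A n F \<pi> \<le> (ln (1 / lam) + \<delta>) * OPT n F \<pi>"
proof -
  obtain m p where mp: "0 < p" "p < 1" "(1 - p) ^ m \<le> lam" "real m * p \<le> 1 - p"
    "real m * p * (1 - p) ^ (m - 1) \<le> (ln (1 / lam) + \<delta>) * (1 - p) ^ m"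
    using hard_parameters[OF assms] by blast
  let ?d = "A (Suc m) (hard_box p)"
  have "\<exists>\<pi>. arrival_order (Suc m) \<pi> \<and> 0 < OPT (Suc m) (hard_box p) \<pi> \<and>
      win_prob (Suc m) (hard_box p) \<pi> ?d \<le> (ln (1 / lam) + \<delta>) * OPT (Suc m) (hard_box p) \<pi>"
  proof (cases "?d [(0, 1)]")
    case True
    thus ?thesis using mp assms by (intro hard_order_if_accept_first) auto
  next
    case False
    thus ?thesis using mp assms ln_inv_lam_bounds by (intro hard_order_if_reject_first) auto
  qed
  thus ?thesis unfolding ALG_def using valid_instance_hard_box by blast
qed

end
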